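(* Let $s\in(1/2,1)$, $\gamma\in(1,2s)$ and $A\subset(0,\gamma)$ finite. Let $B\subset\mathbb{R}^{1+d}$ be a half-parabolic ball, $U:B\times B\to\mathbb{R}$ a germ with $[U]_{\gamma;B}<\infty$, and let $\nu:B\to\mathbb{R}^d$, $\nu(x):=\nabla_{y_{1:d}}U(x,y)|_{y=x}$ (the vector at which the infimum in the definition of $[U]_{\gamma;B}$ is attained). Let $\Lambda:B\times B\to\mathbb{R}^d$ be a germ such that $[U]_{\gamma\text{-3pt};B}<\infty$ with respect to $\Lambda$ and $A$, and consider the germ $(\nu-\Lambda)(x,y):=\nu(y)-\nu(x)-\Lambda(x,y)$. Then $$[\nu-\Lambda]_{\gamma-1;B}\lesssim[U]_{\gamma\text{-3pt};B}+[U]_{\gamma;B},$$ with implicit constant depending only on $\gamma$ and $A$.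
   Context: Points of $\mathbb{R}^{1+d}$ are $x=(x_0,x_{1:d})$. Metric $d(x,y):=\max\{|x_0-y_0|^{1/(2s)},|x_{1:d}-y_{1:d}|\}$. Half-parabolic ball $B_r(x):=(x_0-r^{2s},x_0]\times B_r(x_{1:d})$. $w\cdot(y-x):=w\cdot(y_{1:d}-x_{1:d})$. For a (scalar or vector valued) germ $G$ and $\alpha\in(0,2s)\setminus\{1\}$: $[G]_{\alpha;B}:=\sup_{x\in B}\inf_{\nu\in\mathbb{R}^d}\sup_{y\in B,y_0\le x_0}|G(x,y)-G(x,x)-\mathbb{1}_{\alpha>1}\nu\cdot(y-x)|/d(x,y)^\alpha$ (for $\alpha<1$ no $\nu$ term). $[U]_{\gamma\text{-3pt};B}$ is the smallest $C$ with $|U(x,z)-U(x,y)-U(y,z)+U(y,y)+\Lambda(x,y)\cdot(z-y)|\le C\sum_{\beta\in A}d(x,y)^\beta d(y,z)^{\gamma-\beta}$ for all $x,y,z\in B$ with $z_0\le y_0\le x_0$. *)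

theory Defs
  imports "HOL-Analysis.Analysis" "HOL-Library.Extended_Real" "HOL-Library.Function_Algebras"
begin

text \<open>Points of R^(1+d) are pairs (x_0, x_{1:d}); the spatial part is a function
  nat => real vanishing at indices >= d, so that the dimension d is an ordinary
  natural-number parameter that can be quantified inside the statement.\<close>

type_synonym pt = "real \<times> (nat \<Rightarrow> real)"

definition Rd :: "nat \<Rightarrow> (nat \<Rightarrow> real) set" where
  "Rd d = {v. \<forall>i\<ge>d. v i = 0}"

definition Pts :: "nat \<Rightarrow> pt set" where
  "Pts d = UNIV \<times> Rd d"

definition dotd :: "nat \<Rightarrow> (nat \<Rightarrow> real) \<Rightarrow> (nat \<Rightarrow> real) \<Rightarrow> real" where
  "dotd d u v = (\<Sum>i<d. u i * v i)"

definition normd :: "nat \<Rightarrow> (nat \<Rightarrow> real) \<Rightarrow> real" where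
  "normd d v = sqrt (dotd d v v)"

definition pdist :: "real \<Rightarrow> nat \<Rightarrow> pt \<Rightarrow> pt \<Rightarrow> real" where
  "pdist s d x y = max (\<bar>fst x - fst y\<bar> powr (1 / (2 * s))) (normd d (snd x - snd y))"

definition hball :: "real \<Rightarrow> nat \<Rightarrow> real \<Rightarrow> pt \<Rightarrow> pt set" where
  "hball s d r x = {y \<in> Pts d. fst x - r powr (2 * s) < fst y \<and> fst y \<le> fst x
                               \<and> normd d (snd y - snd x) < r}"

definition germ_sn :: "real \<Rightarrow> nat \<Rightarrow> real \<Rightarrow> pt set \<Rightarrow> (pt \<Rightarrow> pt \<Rightarrow> real) \<Rightarrow> ereal" where
  "germ_sn s d \<alpha> B G =
     (SUP x\<in>B. INF \<nu>\<in>Rd d. SUP y\<in>{y \<in> B. fst y \<le> fst x}.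
        ereal (\<bar>G x y - G x x - (if \<alpha> > 1 then dotd d \<nu> (snd y - snd x) else 0)\<bar>
               / pdist s d x y powr \<alpha>))"

definition vgerm_sn :: "real \<Rightarrow> nat \<Rightarrow> real \<Rightarrow> pt set \<Rightarrow> (pt \<Rightarrow> pt \<Rightarrow> (nat \<Rightarrow> real)) \<Rightarrow> ereal" where
  "vgerm_sn s d \<alpha> B G =
     (SUP x\<in>B. SUP y\<in>{y \<in> B. fst y \<le> fst x}.
        ereal (normd d (G x y - G x x) / pdist s d x y powr \<alpha>))"

text \<open>[U]_{gamma-3pt;B} w.r.t. Lambda and A: the smallest C (infinity if none).\<close>
definition three_pt_sn :: "real \<Rightarrow> nat \<Rightarrow> real \<Rightarrow> real set \<Rightarrow> pt set
      \<Rightarrow> (pt \<Rightarrow> pt \<Rightarrow> real) \<Rightarrow> (pt \<Rightarrow> pt \<Rightarrow> (nat \<Rightarrow> real)) \<Rightarrow> ereal" where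
  "three_pt_sn s d \<gamma> A B U \<Lambda> =
     Inf {ereal C | C. 0 \<le> C \<and> (\<forall>x\<in>B. \<forall>y\<in>B. \<forall>z\<in>B. fst z \<le> fst y \<and> fst y \<le> fst x \<longrightarrow>
        \<bar>U x z - U x y - U y z + U y y + dotd d (\<Lambda> x y) (snd z - snd y)\<bar>
          \<le> C * (\<Sum>\<beta>\<in>A. pdist s d x y powr \<beta> * pdist s d y z powr (\<gamma> - \<beta>)))}"

text \<open>nu is the spatial gradient of y |-> U(x,y) at y = x (Frechet differentiability
  in the spatial variables, written out).\<close>
definition spatial_grad :: "nat \<Rightarrow> (pt \<Rightarrow> pt \<Rightarrow> real) \<Rightarrow> pt \<Rightarrow> (nat \<Rightarrow> real) \<Rightarrow> bool" where
  "spatial_grad d U x w \<longleftrightarrow> w \<in> Rd d \<and>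
     (\<forall>\<epsilon>>0. \<exists>\<delta>>0. \<forall>h\<in>Rd d. normd d h < \<delta> \<longrightarrow>
        \<bar>U x (fst x, snd x + h) - U x x - dotd d w h\<bar> \<le> \<epsilon> * normd d h)"

end

theory Submission
  imports Defs
begin

text \<open>
  Put v = \<nu>(y) - \<nu>(x) - \<Lambda>(x,y), \<rho> = d(x,y) and z = (y_0, y + h). Then v\<cdot>h is a signed sum
  of the first-order Taylor remainders of U at (x,z), (x,y), (y,z) and of the three-point defect
  at (x,y,z); for |h| \<le> \<rho> each of these is O(\<rho>^\<gamma>), with constants [U]_\<gamma> and [U]_\<gamma>-3pt.
  Inside the half ball such an h can still be chosen along v with length comparable to \<rho>
  (after a shift towards the centre), which gives |v| \<lesssim> \<rho>^(\<gamma>-1).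

  For this, the vector realising [U]_\<gamma> at x has to be the gradient \<nu>(x), and \<Lambda>(x,x) has to
  vanish; both hold because a linear form that is o(|h|) is zero.
\<close>

section \<open>The Euclidean structure of \<open>Rd d\<close>\<close>

lemma normd_eq_L2_set: "normd d v = L2_set v {..<d}"
  unfolding normd_def dotd_def L2_set_def by (simp add: power2_eq_square)

lemma normd_nonneg: "0 \<le> normd d v"
  by (simp add: normd_eq_L2_set)

lemma normd_add_le: "normd d (u + v) \<le> normd d u + normd d v"
  unfolding normd_eq_L2_set using L2_set_triangle_ineq[of u v "{..<d}"] by (simp add: plus_fun_def)

lemma normd_scale: "normd d (\<lambda>i. c * v i) = \<bar>c\<bar> * normd d v"
  unfolding normd_eq_L2_set L2_set_def
  by (simp add: power_mult_distrib sum_distrib_left[symmetric] real_sqrt_mult)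

lemma normd_minus_commute: "normd d (u - v) = normd d (v - u)"
  unfolding normd_def dotd_def by (simp add: algebra_simps)

lemma normd_diff_le: "normd d (u - v) \<le> normd d u + normd d v"
proof -
  have e: "u - v = u + (\<lambda>i. (-1) * v i)" by (simp add: fun_eq_iff)
  have "normd d (\<lambda>i. (-1) * v i) = normd d v" using normd_scale[of d "-1" v] by simp
  then show ?thesis unfolding e using normd_add_le[of d u "\<lambda>i. (-1) * v i"] by linarith
qed

lemma normd_space_shift_le: "normd d (c + h - c0) \<le> normd d (c - c0) + normd d h"
  by (metis add_diff_eq diff_add_eq normd_add_le)

lemma dotd_abs_le: "\<bar>dotd d u v\<bar> \<le> normd d u * normd d v"
proof -
  have "\<bar>dotd d u v\<bar> \<le> (\<Sum>i<d. \<bar>u i\<bar> * \<bar>v i\<bar>)"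
    unfolding dotd_def by (rule order_trans[OF sum_abs]) (simp add: abs_mult)
  also have "\<dots> \<le> normd d u * normd d v" unfolding normd_eq_L2_set by (rule L2_set_mult_ineq)
  finally show ?thesis .
qed

lemma dotd_self: "dotd d v v = (normd d v)\<^sup>2"
  unfolding normd_def by (simp add: dotd_def sum_nonneg)

lemma dotd_add_right: "dotd d u (v + w) = dotd d u v + dotd d u w"
  unfolding dotd_def by (simp add: algebra_simps sum.distrib)

lemma dotd_diff_left: "dotd d (u - w) v = dotd d u v - dotd d w v"
  unfolding dotd_def by (simp add: algebra_simps sum_subtractf)

lemma dotd_scale_right: "dotd d u (\<lambda>i. c * v i) = c * dotd d u v"
  unfolding dotd_def by (simp add: algebra_simps sum_distrib_left)

lemma dotd_eq_0_if_normd_eq_0: "normd d u = 0 \<Longrightarrow> dotd d u v = 0"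
  using dotd_abs_le[of d u v] by simp

lemma Rd_add: "u \<in> Rd d \<Longrightarrow> v \<in> Rd d \<Longrightarrow> u + v \<in> Rd d"
  unfolding Rd_def by auto

lemma Rd_diff: "u \<in> Rd d \<Longrightarrow> v \<in> Rd d \<Longrightarrow> u - v \<in> Rd d"
  unfolding Rd_def by auto

lemma Rd_scale: "v \<in> Rd d \<Longrightarrow> (\<lambda>i. c * v i) \<in> Rd d"
  unfolding Rd_def by auto

lemma normd_eq_0_if_pairing_little_o:
  assumes v: "v \<in> Rd d"
    and little_o: "\<And>\<epsilon>. 0 < \<epsilon> \<Longrightarrow> \<exists>\<delta>>0. \<forall>h\<in>Rd d. normd d h < \<delta> \<longrightarrow> \<bar>dotd d v h\<bar> \<le> \<epsilon> * normd d h"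
  shows "normd d v = 0"
proof (rule ccontr)
  define n where "n = normd d v"
  assume "normd d v \<noteq> 0"
  then have n: "0 < n" using normd_nonneg[of d v] by (simp add: n_def)
  obtain \<delta> where \<delta>: "0 < \<delta>" and bd: "\<forall>h\<in>Rd d. normd d h < \<delta> \<longrightarrow> \<bar>dotd d v h\<bar> \<le> n / 2 * normd d h"
    using little_o[of "n / 2"] n by auto
  define h where "h = (\<lambda>i. \<delta> / (2 * n) * v i)"
  have nh: "normd d h = \<delta> / 2"
    unfolding h_def normd_scale using n \<delta> by (simp add: n_def[symmetric])
  have "dotd d v h = \<delta> / 2 * n"
    unfolding h_def dotd_scale_right dotd_self n_def[symmetric] using n by (simp add: power2_eq_square)
  moreover have "h \<in> Rd d" unfolding h_def using v by (rule Rd_scale)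
  then have "\<bar>dotd d v h\<bar> \<le> n / 2 * (\<delta> / 2)"
    using bd nh \<delta> by (metis half_gt_zero_iff less_add_same_cancel1 field_sum_of_halves)
  ultimately show False using mult_pos_pos[OF \<delta> n] by (simp add: field_simps)
qed

lemma normd_le_if_pairing_bounded_on_ball:
  assumes v: "v \<in> Rd d" and c: "c \<in> Rd d" and c0: "c0 \<in> Rd d" and c_in: "normd d (c - c0) < r"
    and \<rho>: "0 < \<rho>" "\<rho> \<le> 2 * r"
    and bd: "\<And>h. h \<in> Rd d \<Longrightarrow> normd d h \<le> \<rho> \<Longrightarrow> normd d (c + h - c0) < r \<Longrightarrow> \<bar>dotd d v h\<bar> \<le> E"
  shows "\<rho> * normd d v \<le> 8 * E"
proof (cases "normd d v = 0")
  case True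
  have "\<bar>dotd d v 0\<bar> \<le> E"
    using bd[of 0] c_in \<rho> by (simp add: Rd_def normd_def dotd_def)
  then show ?thesis using True by (simp add: dotd_def)
next
  case False
  define n where "n = normd d v"
  have n: "0 < n" using False normd_nonneg[of d v] by (simp add: n_def)
  define \<theta> where "\<theta> = \<rho> / (2 * r)"
  have \<theta>: "0 < \<theta>" "\<theta> \<le> 1" using \<rho> by (auto simp: \<theta>_def)
  \<comment> \<open>h0 moves c towards the centre far enough that adding w of length \<rho>/4 stays in the ball.\<close>
  define h0 where "h0 = (\<lambda>i. \<theta> * (c0 - c) i)"
  define w where "w = (\<lambda>i. \<rho> / (4 * n) * v i)"
  have h0: "h0 \<in> Rd d" unfolding h0_def using Rd_diff[OF c0 c] by (rule Rd_scale)
  have w: "w \<in> Rd d" unfolding w_def using v by (rule Rd_scale)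
  have nh0: "normd d h0 = \<theta> * normd d (c - c0)"
    unfolding h0_def normd_scale normd_minus_commute[of d c0 c] using \<theta> by simp
  have nw: "normd d w = \<rho> / 4"
    unfolding w_def normd_scale using n \<rho> by (simp add: n_def[symmetric])
  have c_h0: "normd d (c + h0 - c0) = (1 - \<theta>) * normd d (c - c0)"
  proof -
    have e: "c + h0 - c0 = (\<lambda>i. (1 - \<theta>) * (c - c0) i)" by (simp add: h0_def fun_eq_iff algebra_simps)
    show ?thesis unfolding e normd_scale using \<theta>(2) by (simp only: abs_of_nonneg diff_ge_0_iff_ge)
  qed
  have "normd d h0 \<le> \<theta> * r"
    unfolding nh0 using c_in \<theta> by (intro mult_left_mono) auto
  also have "\<dots> = \<rho> / 2" using \<rho> by (simp add: \<theta>_def)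
  finally have nh0_le: "normd d h0 \<le> \<rho> / 2" .
  have "normd d (c + h0 - c0) < r"
    unfolding c_h0 using mult_left_le_one_le[of "normd d (c - c0)" "1 - \<theta>"] \<theta> c_in normd_nonneg[of d "c - c0"]
    by linarith
  then have "\<bar>dotd d v h0\<bar> \<le> E" using bd[OF h0] nh0_le \<rho> by simp
  moreover have "\<bar>dotd d v (h0 + w)\<bar> \<le> E"
  proof (rule bd)
    show "h0 + w \<in> Rd d" using h0 w by (rule Rd_add)
    show "normd d (h0 + w) \<le> \<rho>"
      using normd_add_le[of d h0 w] nh0_le nw \<rho> by simp
    have "normd d (c + (h0 + w) - c0) \<le> (1 - \<theta>) * normd d (c - c0) + \<rho> / 4"
      using normd_add_le[of d "c + h0 - c0" w] c_h0 nw by (simp add: algebra_simps)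
    also have "\<dots> \<le> (1 - \<theta>) * r + \<rho> / 4"
      using \<theta> c_in by (intro add_right_mono mult_left_mono) auto
    also have "\<dots> < r" using \<rho> by (simp add: \<theta>_def field_simps)
    finally show "normd d (c + (h0 + w) - c0) < r" .
  qed
  moreover have "dotd d v w = \<rho> / 4 * n"
    unfolding w_def dotd_scale_right dotd_self n_def[symmetric] using n by (simp add: power2_eq_square)
  ultimately have "\<rho> / 4 * n \<le> 2 * E"
    using dotd_add_right[of d v h0 w] by linarith
  then show ?thesis by (simp add: n_def)
qed

section \<open>Parabolic distance and half-parabolic balls\<close>

lemma pdist_nonneg: "0 \<le> pdist s d x y"
  unfolding pdist_def by (simp add: normd_nonneg le_max_iff_disj)

lemma pdist_self: "pdist s d x x = 0"
  unfolding pdist_def normd_def dotd_def by simp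

lemma pdist_eq_0_imp_eq:
  assumes "x \<in> Pts d" "y \<in> Pts d" "pdist s d x y = 0"
  shows "x = y"
proof -
  have "\<bar>fst x - fst y\<bar> powr (1 / (2 * s)) = 0" and n: "normd d (snd x - snd y) = 0"
    using assms(3) normd_nonneg[of d "snd x - snd y"] unfolding pdist_def max_def
    by (auto split: if_splits)
  then have "fst x = fst y" by simp
  moreover have "snd x i = snd y i" for i
    using n assms(1,2) unfolding normd_eq_L2_set Pts_def Rd_def
    by (cases "i < d") (auto simp: L2_set_eq_0_iff)
  ultimately show ?thesis by (simp add: prod_eq_iff fun_eq_iff)
qed

lemma pdist_eq_normd_if_same_time: "fst x = fst y \<Longrightarrow> pdist s d x y = normd d (snd y - snd x)"
  unfolding pdist_def by (simp add: normd_nonneg normd_minus_commute)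

lemma pdist_le_if_same_time:
  assumes "fst z = fst y"
  shows "pdist s d x z \<le> pdist s d x y + normd d (snd z - snd y)"
proof -
  have "snd x - snd z = (snd x - snd y) - (snd z - snd y)" by simp
  then have "normd d (snd x - snd z) \<le> normd d (snd x - snd y) + normd d (snd z - snd y)"
    by (metis normd_diff_le)
  then show ?thesis
    using assms normd_nonneg[of d "snd z - snd y"] unfolding pdist_def by auto
qed

lemma hball_iff:
  "z \<in> hball s d r x0 \<longleftrightarrow> snd z \<in> Rd d \<and> fst x0 - r powr (2 * s) < fst z \<and> fst z \<le> fst x0
      \<and> normd d (snd z - snd x0) < r"
  unfolding hball_def Pts_def by (auto simp: mem_Times_iff)

lemma hball_subset_Pts: "hball s d r x0 \<subseteq> Pts d"
  unfolding hball_def by auto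

lemma center_in_hball: "x0 \<in> Pts d \<Longrightarrow> 0 < r \<Longrightarrow> x0 \<in> hball s d r x0"
  by (simp add: hball_iff Pts_def mem_Times_iff normd_def dotd_def)

lemma hball_space_shift:
  assumes "x \<in> hball s d r x0" "h \<in> Rd d" "normd d (snd x + h - snd x0) < r"
  shows "(fst x, snd x + h) \<in> hball s d r x0"
  using assms Rd_add by (auto simp: hball_iff)

lemma pdist_le_diameter_hball:
  assumes s: "0 < s" and x: "x \<in> hball s d r x0" and y: "y \<in> hball s d r x0"
  shows "pdist s d x y \<le> 2 * r"
proof -
  have r: "0 < r" using x normd_nonneg[of d "snd x - snd x0"] by (simp add: hball_iff)
  have "\<bar>fst x - fst y\<bar> \<le> r powr (2 * s)" using x y by (auto simp: hball_iff)
  then have "\<bar>fst x - fst y\<bar> powr (1 / (2 * s)) \<le> (r powr (2 * s)) powr (1 / (2 * s))"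
    using s by (intro powr_mono2) auto
  also have "\<dots> = r" using s r by (simp add: powr_powr)
  finally have time: "\<bar>fst x - fst y\<bar> powr (1 / (2 * s)) \<le> 2 * r" using r by simp
  have "snd x - snd y = (snd x - snd x0) - (snd y - snd x0)" by simp
  then have "normd d (snd x - snd y) \<le> normd d (snd x - snd x0) + normd d (snd y - snd x0)"
    by (metis normd_diff_le)
  then have space: "normd d (snd x - snd y) \<le> 2 * r" using x y by (simp add: hball_iff)
  show ?thesis unfolding pdist_def using time space by simp
qed

section \<open>Consequences of finite seminorms\<close>

definition taylor_remainder :: "nat \<Rightarrow> (pt \<Rightarrow> pt \<Rightarrow> real) \<Rightarrow> (pt \<Rightarrow> (nat \<Rightarrow> real)) \<Rightarrow> pt \<Rightarrow> pt \<Rightarrow> real"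
  where "taylor_remainder d U \<nu> x y = U x y - U x x - dotd d (\<nu> x) (snd y - snd x)"

definition three_point_defect :: "nat \<Rightarrow> (pt \<Rightarrow> pt \<Rightarrow> real) \<Rightarrow> (pt \<Rightarrow> pt \<Rightarrow> (nat \<Rightarrow> real))
      \<Rightarrow> pt \<Rightarrow> pt \<Rightarrow> pt \<Rightarrow> real"
  where "three_point_defect d U \<Lambda> x y z = U x z - U x y - U y z + U y y + dotd d (\<Lambda> x y) (snd z - snd y)"

lemma dotd_increment_eq:
  "dotd d (\<nu> y - \<nu> x - \<Lambda> x y) (snd z - snd y)
     = taylor_remainder d U \<nu> x z - taylor_remainder d U \<nu> x y - taylor_remainder d U \<nu> y z
       - three_point_defect d U \<Lambda> x y z"
  unfolding taylor_remainder_def three_point_defect_def dotd_def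
  by (simp add: algebra_simps sum_subtractf[symmetric] sum.distrib[symmetric])

lemma germ_sn_nonneg: "x \<in> B \<Longrightarrow> 0 \<le> germ_sn s d \<gamma> B U"
  unfolding germ_sn_def
  by (rule SUP_upper2[where i = x], assumption, rule INF_greatest, rule SUP_upper2[where i = x])
     (auto simp: dotd_def)

lemma three_pt_sn_nonneg: "0 \<le> three_pt_sn s d \<gamma> A B U \<Lambda>"
  unfolding three_pt_sn_def by (rule Inf_greatest) auto

lemma germ_sn_lessE:
  assumes less: "germ_sn s d \<gamma> B U < ereal K" and x: "x \<in> B" and \<gamma>: "1 < \<gamma>" and B: "B \<subseteq> Pts d"
  obtains \<nu>' where "\<nu>' \<in> Rd d"
    and "\<And>y. y \<in> B \<Longrightarrow> fst y \<le> fst x \<Longrightarrow>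
           \<bar>U x y - U x x - dotd d \<nu>' (snd y - snd x)\<bar> \<le> K * pdist s d x y powr \<gamma>"
proof -
  define q where "q \<nu>' y = \<bar>U x y - U x x - dotd d \<nu>' (snd y - snd x)\<bar> / pdist s d x y powr \<gamma>" for \<nu>' y
  have "(INF \<nu>'\<in>Rd d. SUP y\<in>{y \<in> B. fst y \<le> fst x}. ereal (q \<nu>' y)) < ereal K"
    using less x \<gamma> unfolding germ_sn_def q_def by (auto intro: SUP_upper le_less_trans)
  then obtain \<nu>' where \<nu>': "\<nu>' \<in> Rd d" and "(SUP y\<in>{y \<in> B. fst y \<le> fst x}. ereal (q \<nu>' y)) < ereal K"
    by (auto simp: INF_less_iff)
  then have q_less: "q \<nu>' y < K" if "y \<in> B" "fst y \<le> fst x" for y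
    using that by (auto dest: SUP_lessD)
  show ?thesis
  proof (rule that[OF \<nu>'])
    fix y assume y: "y \<in> B" "fst y \<le> fst x"
    show "\<bar>U x y - U x x - dotd d \<nu>' (snd y - snd x)\<bar> \<le> K * pdist s d x y powr \<gamma>"
    proof (cases "pdist s d x y = 0")
      case True
      then have "x = y" using pdist_eq_0_imp_eq B x y by blast
      then show ?thesis by (simp add: dotd_def pdist_self)
    next
      case False
      then have p: "0 < pdist s d x y powr \<gamma>" using pdist_nonneg[of s d x y] by simp
      show ?thesis using q_less[OF y] unfolding q_def pos_divide_less_eq[OF p] by linarith
    qed
  qed
qed

lemma powr_le_mult_if_le:
  fixes n \<delta> \<gamma> :: real
  assumes "0 \<le> n" "n \<le> \<delta>" "1 \<le> \<gamma>"
  shows "n powr \<gamma> \<le> \<delta> powr (\<gamma> - 1) * n"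
proof (cases "n = 0")
  case False
  then have "n powr \<gamma> = n powr (\<gamma> - 1) * n" using assms(1) by (simp add: powr_mult_base mult.commute)
  also have "\<dots> \<le> \<delta> powr (\<gamma> - 1) * n" using assms by (intro mult_right_mono powr_mono2) auto
  finally show ?thesis .
qed simp

lemma spatial_grad_dotd_eq:
  assumes grad: "spatial_grad d U x w" and \<nu>': "\<nu>' \<in> Rd d" and \<gamma>: "1 < \<gamma>" and \<delta>0: "0 < \<delta>0"
    and approx: "\<And>h. h \<in> Rd d \<Longrightarrow> normd d h < \<delta>0 \<Longrightarrow>
       \<bar>U x (fst x, snd x + h) - U x x - dotd d \<nu>' h\<bar> \<le> M * normd d h powr \<gamma>"
  shows "dotd d w h = dotd d \<nu>' h"
proof -
  have "normd d (w - \<nu>') = 0"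
  proof (rule normd_eq_0_if_pairing_little_o)
    show "w - \<nu>' \<in> Rd d" using grad \<nu>' by (simp add: spatial_grad_def Rd_diff)
    fix \<epsilon> :: real assume \<epsilon>: "0 < \<epsilon>"
    obtain \<delta>1 where \<delta>1: "0 < \<delta>1" and lin: "\<forall>h\<in>Rd d. normd d h < \<delta>1 \<longrightarrow>
        \<bar>U x (fst x, snd x + h) - U x x - dotd d w h\<bar> \<le> \<epsilon> / 2 * normd d h"
      using grad \<epsilon> unfolding spatial_grad_def by (meson half_gt_zero)
    define \<delta>2 where "\<delta>2 = (\<epsilon> / (2 * (\<bar>M\<bar> + 1))) powr (1 / (\<gamma> - 1))"
    have \<delta>2: "0 < \<delta>2" using \<epsilon> by (simp add: \<delta>2_def)
    have \<delta>2_powr: "\<delta>2 powr (\<gamma> - 1) = \<epsilon> / (2 * (\<bar>M\<bar> + 1))"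
      using \<epsilon> \<gamma> by (simp add: \<delta>2_def powr_powr)
    show "\<exists>\<delta>>0. \<forall>h\<in>Rd d. normd d h < \<delta> \<longrightarrow> \<bar>dotd d (w - \<nu>') h\<bar> \<le> \<epsilon> * normd d h"
    proof (intro exI[of _ "min \<delta>0 (min \<delta>1 \<delta>2)"] conjI ballI impI)
      show "0 < min \<delta>0 (min \<delta>1 \<delta>2)" using \<delta>0 \<delta>1 \<delta>2 by simp
      fix h assume h: "h \<in> Rd d" and small: "normd d h < min \<delta>0 (min \<delta>1 \<delta>2)"
      have "M * normd d h powr \<gamma> \<le> \<bar>M\<bar> * (\<delta>2 powr (\<gamma> - 1) * normd d h)"
        using powr_le_mult_if_le[of "normd d h" \<delta>2 \<gamma>] small \<gamma> normd_nonneg[of d h]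
        by (intro order_trans[OF abs_ge_self[THEN mult_right_mono] mult_left_mono]) auto
      also have "\<dots> \<le> \<epsilon> / 2 * normd d h"
        unfolding \<delta>2_powr using \<epsilon> normd_nonneg[of d h] by (simp add: field_simps)
      finally have "\<bar>U x (fst x, snd x + h) - U x x - dotd d \<nu>' h\<bar> \<le> \<epsilon> / 2 * normd d h"
        using approx[OF h] small by force
      moreover have "\<bar>U x (fst x, snd x + h) - U x x - dotd d w h\<bar> \<le> \<epsilon> / 2 * normd d h"
        using lin h small by simp
      ultimately show "\<bar>dotd d (w - \<nu>') h\<bar> \<le> \<epsilon> * normd d h"
        unfolding dotd_diff_left by linarith
    qed
  qed
  then show ?thesis using dotd_eq_0_if_normd_eq_0[of d "w - \<nu>'" h] by (simp add: dotd_diff_left)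
qed

lemma taylor_remainder_le_if_germ_sn_less:
  assumes less: "germ_sn s d \<gamma> (hball s d r x0) U < ereal K" and \<gamma>: "1 < \<gamma>"
    and x: "x \<in> hball s d r x0" and grad: "spatial_grad d U x (\<nu> x)"
    and y: "y \<in> hball s d r x0" and yx: "fst y \<le> fst x"
  shows "\<bar>taylor_remainder d U \<nu> x y\<bar> \<le> K * pdist s d x y powr \<gamma>"
proof -
  obtain \<nu>' where \<nu>': "\<nu>' \<in> Rd d" and bd: "\<And>y. y \<in> hball s d r x0 \<Longrightarrow> fst y \<le> fst x \<Longrightarrow>
      \<bar>U x y - U x x - dotd d \<nu>' (snd y - snd x)\<bar> \<le> K * pdist s d x y powr \<gamma>"
    using germ_sn_lessE[OF less x \<gamma> hball_subset_Pts] by blast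
  have "dotd d (\<nu> x) h = dotd d \<nu>' h" for h
  proof (rule spatial_grad_dotd_eq[OF grad \<nu>' \<gamma>])
    show "0 < r - normd d (snd x - snd x0)" using x by (simp add: hball_iff)
    fix h assume h: "h \<in> Rd d" "normd d h < r - normd d (snd x - snd x0)"
    then have "(fst x, snd x + h) \<in> hball s d r x0"
      using x normd_space_shift_le[of d "snd x" h "snd x0"] by (intro hball_space_shift) auto
    moreover have "pdist s d x (fst x, snd x + h) = normd d h"
      by (simp add: pdist_eq_normd_if_same_time)
    ultimately show "\<bar>U x (fst x, snd x + h) - U x x - dotd d \<nu>' h\<bar> \<le> K * normd d h powr \<gamma>"
      using bd by fastforce
  qed
  then show ?thesis using bd[OF y yx] by (simp add: taylor_remainder_def)
qed

lemma three_point_defect_le_if_three_pt_sn_less: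
  assumes less: "three_pt_sn s d \<gamma> A B U \<Lambda> < ereal T"
    and pts: "x \<in> B" "y \<in> B" "z \<in> B" "fst z \<le> fst y" "fst y \<le> fst x"
  shows "\<bar>three_point_defect d U \<Lambda> x y z\<bar>
           \<le> T * (\<Sum>\<beta>\<in>A. pdist s d x y powr \<beta> * pdist s d y z powr (\<gamma> - \<beta>))"
proof -
  obtain C where "\<forall>x\<in>B. \<forall>y\<in>B. \<forall>z\<in>B. fst z \<le> fst y \<and> fst y \<le> fst x \<longrightarrow>
        \<bar>U x z - U x y - U y z + U y y + dotd d (\<Lambda> x y) (snd z - snd y)\<bar>
          \<le> C * (\<Sum>\<beta>\<in>A. pdist s d x y powr \<beta> * pdist s d y z powr (\<gamma> - \<beta>))" and "C < T"
    using less unfolding three_pt_sn_def by (auto simp: Inf_less_iff)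
  moreover have "0 \<le> (\<Sum>\<beta>\<in>A. pdist s d x y powr \<beta> * pdist s d y z powr (\<gamma> - \<beta>))"
    by (intro sum_nonneg) simp
  ultimately show ?thesis
    using pts unfolding three_point_defect_def by (meson less_imp_le mult_right_mono order_trans)
qed

lemma normd_diag_eq_0_if_three_pt_sn_less:
  assumes less: "three_pt_sn s d \<gamma> A (hball s d r x0) U \<Lambda> < ereal T"
    and x: "x \<in> hball s d r x0" and \<Lambda>: "\<Lambda> x x \<in> Rd d"
  shows "normd d (\<Lambda> x x) = 0"
proof (rule normd_eq_0_if_pairing_little_o[OF \<Lambda>])
  fix \<epsilon> :: real assume "0 < \<epsilon>"
  show "\<exists>\<delta>>0. \<forall>h\<in>Rd d. normd d h < \<delta> \<longrightarrow> \<bar>dotd d (\<Lambda> x x) h\<bar> \<le> \<epsilon> * normd d h"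
  proof (intro exI[of _ "r - normd d (snd x - snd x0)"] conjI ballI impI)
    show "0 < r - normd d (snd x - snd x0)" using x by (simp add: hball_iff)
    fix h assume h: "h \<in> Rd d" "normd d h < r - normd d (snd x - snd x0)"
    then have "(fst x, snd x + h) \<in> hball s d r x0"
      using x normd_space_shift_le[of d "snd x" h "snd x0"] by (intro hball_space_shift) auto
    from three_point_defect_le_if_three_pt_sn_less[OF less x x this]
    show "\<bar>dotd d (\<Lambda> x x) h\<bar> \<le> \<epsilon> * normd d h"
      using \<open>0 < \<epsilon>\<close> normd_nonneg[of d h] by (simp add: three_point_defect_def pdist_self)
  qed
qed

section \<open>The increment estimate\<close>

lemma powr_sum_le_card:
  fixes a b :: real
  assumes "\<forall>\<beta>\<in>A. \<beta> \<le> \<gamma>" "0 \<le> b" "b \<le> a"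
  shows "(\<Sum>\<beta>\<in>A. a powr \<beta> * b powr (\<gamma> - \<beta>)) \<le> real (card A) * a powr \<gamma>"
proof (rule sum_bounded_above)
  fix \<beta> assume "\<beta> \<in> A"
  then have "a powr \<beta> * b powr (\<gamma> - \<beta>) \<le> a powr \<beta> * a powr (\<gamma> - \<beta>)"
    using assms by (intro mult_left_mono powr_mono2) auto
  also have "\<dots> = a powr \<gamma>" by (simp add: powr_add[symmetric])
  finally show "a powr \<beta> * b powr (\<gamma> - \<beta>) \<le> a powr \<gamma>" .
qed

lemma dotd_increment_le:
  assumes taylor: "\<And>x y. x \<in> B \<Longrightarrow> y \<in> B \<Longrightarrow> fst y \<le> fst x \<Longrightarrow>
        \<bar>taylor_remainder d U \<nu> x y\<bar> \<le> K * pdist s d x y powr \<gamma>"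
    and three: "\<And>x y z. x \<in> B \<Longrightarrow> y \<in> B \<Longrightarrow> z \<in> B \<Longrightarrow> fst z \<le> fst y \<Longrightarrow> fst y \<le> fst x \<Longrightarrow>
        \<bar>three_point_defect d U \<Lambda> x y z\<bar> \<le> T * (\<Sum>\<beta>\<in>A. pdist s d x y powr \<beta> * pdist s d y z powr (\<gamma> - \<beta>))"
    and A: "\<forall>\<beta>\<in>A. \<beta> \<le> \<gamma>" and \<gamma>: "0 \<le> \<gamma>" "\<gamma> \<le> 2" and K: "0 \<le> K" and T: "0 \<le> T"
    and pts: "x \<in> B" "y \<in> B" "z \<in> B" and time: "fst z = fst y" "fst y \<le> fst x"
    and near: "normd d (snd z - snd y) \<le> pdist s d x y"
  shows "\<bar>dotd d (\<nu> y - \<nu> x - \<Lambda> x y) (snd z - snd y)\<bar> \<le> (T * card A + 6 * K) * pdist s d x y powr \<gamma>"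
proof -
  define \<rho> where "\<rho> = pdist s d x y"
  have yz: "pdist s d y z \<le> \<rho>"
    using near time by (simp add: \<rho>_def pdist_eq_normd_if_same_time)
  have "pdist s d x z \<le> 2 * \<rho>"
    using pdist_le_if_same_time[OF time(1), of s d x] near by (simp add: \<rho>_def)
  then have "pdist s d x z powr \<gamma> \<le> (2 * \<rho>) powr \<gamma>"
    using pdist_nonneg \<gamma> by (intro powr_mono2) auto
  also have "\<dots> \<le> 4 * \<rho> powr \<gamma>"
  proof -
    have "(2::real) powr \<gamma> \<le> 2 powr 2" using \<gamma> by (intro powr_mono) auto
    then show ?thesis using pdist_nonneg by (simp add: \<rho>_def powr_mult mult_right_mono)
  qed
  finally have xz: "pdist s d x z powr \<gamma> \<le> 4 * \<rho> powr \<gamma>" .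
  have zy: "fst z \<le> fst y" using time(1) by simp
  have "\<bar>three_point_defect d U \<Lambda> x y z\<bar> \<le> T * (card A * \<rho> powr \<gamma>)"
    using three[OF pts zy time(2)] powr_sum_le_card[OF A pdist_nonneg yz] T
    unfolding \<rho>_def by (meson mult_left_mono order_trans)
  moreover have "\<bar>taylor_remainder d U \<nu> x z\<bar> \<le> K * (4 * \<rho> powr \<gamma>)"
    using taylor[OF pts(1,3)] time xz K by (simp add: order_trans[OF _ mult_left_mono])
  moreover have "\<bar>taylor_remainder d U \<nu> x y\<bar> \<le> K * \<rho> powr \<gamma>"
    using taylor[of x y] pts time by (simp add: \<rho>_def)
  moreover have "\<bar>taylor_remainder d U \<nu> y z\<bar> \<le> K * \<rho> powr \<gamma>"
    using taylor[OF pts(2,3) zy] powr_mono2[OF \<gamma>(1) pdist_nonneg yz] K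
    by (simp add: order_trans[OF _ mult_left_mono])
  ultimately show ?thesis
    unfolding dotd_increment_eq[where U = U] \<rho>_def[symmetric] by (simp add: algebra_simps)
qed

lemma normd_increment_le:
  assumes taylor: "\<And>x y. x \<in> hball s d r x0 \<Longrightarrow> y \<in> hball s d r x0 \<Longrightarrow> fst y \<le> fst x \<Longrightarrow>
        \<bar>taylor_remainder d U \<nu> x y\<bar> \<le> K * pdist s d x y powr \<gamma>"
    and three: "\<And>x y z. x \<in> hball s d r x0 \<Longrightarrow> y \<in> hball s d r x0 \<Longrightarrow> z \<in> hball s d r x0 \<Longrightarrow>
        fst z \<le> fst y \<Longrightarrow> fst y \<le> fst x \<Longrightarrow>
        \<bar>three_point_defect d U \<Lambda> x y z\<bar> \<le> T * (\<Sum>\<beta>\<in>A. pdist s d x y powr \<beta> * pdist s d y z powr (\<gamma> - \<beta>))"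
    and A: "\<forall>\<beta>\<in>A. \<beta> \<le> \<gamma>" and \<gamma>: "0 < \<gamma>" "\<gamma> \<le> 2" and K: "0 \<le> K" and T: "0 \<le> T"
    and s: "0 < s" and x0: "x0 \<in> Pts d"
    and x: "x \<in> hball s d r x0" and y: "y \<in> hball s d r x0" and yx: "fst y \<le> fst x"
    and v: "\<nu> y - \<nu> x - \<Lambda> x y \<in> Rd d"
  shows "pdist s d x y * normd d (\<nu> y - \<nu> x - \<Lambda> x y) \<le> 8 * (T * card A + 6 * K) * pdist s d x y powr \<gamma>"
proof (cases "pdist s d x y = 0")
  case True
  then show ?thesis by simp
next
  case False
  then have \<rho>: "0 < pdist s d x y" using pdist_nonneg[of s d x y] by simp
  have "pdist s d x y * normd d (\<nu> y - \<nu> x - \<Lambda> x y) \<le> 8 * ((T * card A + 6 * K) * pdist s d x y powr \<gamma>)"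
  proof (rule normd_le_if_pairing_bounded_on_ball[OF v])
    show "snd y \<in> Rd d" "normd d (snd y - snd x0) < r" using y by (simp_all add: hball_iff)
    show "snd x0 \<in> Rd d" using x0 by (simp add: Pts_def mem_Times_iff)
    show "0 < pdist s d x y" "pdist s d x y \<le> 2 * r" using \<rho> pdist_le_diameter_hball[OF s x y] by simp_all
    fix h assume h: "h \<in> Rd d" "normd d h \<le> pdist s d x y" "normd d (snd y + h - snd x0) < r"
    have "(fst y, snd y + h) \<in> hball s d r x0" using hball_space_shift[OF y h(1,3)] .
    from dotd_increment_le[OF taylor three A less_imp_le[OF \<gamma>(1)] \<gamma>(2) K T x y this] yx h(2)
    show "\<bar>dotd d (\<nu> y - \<nu> x - \<Lambda> x y) h\<bar> \<le> (T * card A + 6 * K) * pdist s d x y powr \<gamma>"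
      by simp
  qed
  then show ?thesis by (simp only: mult.assoc)
qed

lemma vgerm_sn_increment_le:
  assumes s: "0 < s" and \<gamma>: "1 < \<gamma>" "\<gamma> \<le> 2" and A: "\<forall>\<beta>\<in>A. \<beta> \<le> \<gamma>" and x0: "x0 \<in> Pts d"
    and germ: "germ_sn s d \<gamma> (hball s d r x0) U < ereal K"
    and three: "three_pt_sn s d \<gamma> A (hball s d r x0) U \<Lambda> < ereal T"
    and grad: "\<forall>x\<in>hball s d r x0. spatial_grad d U x (\<nu> x)"
    and \<Lambda>: "\<forall>x\<in>hball s d r x0. \<forall>y\<in>hball s d r x0. \<Lambda> x y \<in> Rd d"
  shows "vgerm_sn s d (\<gamma> - 1) (hball s d r x0) (\<lambda>x y. \<nu> y - \<nu> x - \<Lambda> x y)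
           \<le> ereal (8 * (T * card A + 6 * K))"
  unfolding vgerm_sn_def
proof (intro SUP_least)
  fix x y assume x: "x \<in> hball s d r x0" and "y \<in> {y \<in> hball s d r x0. fst y \<le> fst x}"
  then have y: "y \<in> hball s d r x0" and yx: "fst y \<le> fst x" by simp_all
  define v where "v = \<nu> y - \<nu> x - \<Lambda> x y"
  define \<rho> where "\<rho> = pdist s d x y"
  define M where "M = 8 * (T * card A + 6 * K)"
  have K: "0 \<le> K" using order.strict_trans1[OF germ_sn_nonneg[OF x] germ] by simp
  have T: "0 \<le> T" using order.strict_trans1[OF three_pt_sn_nonneg three] by simp
  have M: "0 \<le> M" using K T by (simp add: M_def)
  have v_in: "v \<in> Rd d"
    using grad \<Lambda> x y by (simp add: v_def spatial_grad_def Rd_diff)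
  have taylor: "\<bar>taylor_remainder d U \<nu> x' y'\<bar> \<le> K * pdist s d x' y' powr \<gamma>"
    if "x' \<in> hball s d r x0" "y' \<in> hball s d r x0" "fst y' \<le> fst x'" for x' y'
    using taylor_remainder_le_if_germ_sn_less[OF germ \<gamma>(1)] grad that by blast
  have "\<rho> * normd d v \<le> M * \<rho> powr \<gamma>"
    using normd_increment_le[OF taylor three_point_defect_le_if_three_pt_sn_less[OF three] A _ \<gamma>(2)
        K T s x0 x y yx] \<gamma>(1) v_in
    by (simp add: v_def \<rho>_def M_def)
  moreover have "normd d (\<Lambda> x x) = 0" using normd_diag_eq_0_if_three_pt_sn_less[OF three x] \<Lambda> x by simp
  then have "normd d (v - (\<nu> x - \<nu> x - \<Lambda> x x)) \<le> normd d v"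
    using normd_add_le[of d v "\<Lambda> x x"] by simp
  ultimately have bound: "\<rho> * normd d (v - (\<nu> x - \<nu> x - \<Lambda> x x)) \<le> M * \<rho> powr \<gamma>"
    using pdist_nonneg[of s d x y] unfolding \<rho>_def by (meson mult_left_mono order_trans)
  have "normd d (v - (\<nu> x - \<nu> x - \<Lambda> x x)) / \<rho> powr (\<gamma> - 1) \<le> M"
  proof (cases "\<rho> = 0")
    case False
    then have "0 < \<rho>" using pdist_nonneg[of s d x y] by (simp add: \<rho>_def)
    moreover from this have "\<rho> powr \<gamma> = \<rho> * \<rho> powr (\<gamma> - 1)" by (simp add: powr_mult_base)
    ultimately show ?thesis using bound by (simp add: pos_divide_le_eq mult.left_commute)
  qed (simp add: M)
  then show "ereal (normd d (\<nu> y - \<nu> x - \<Lambda> x y - (\<nu> x - \<nu> x - \<Lambda> x x)) / pdist s d x y powr (\<gamma> - 1))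
           \<le> ereal M"
    by (simp add: v_def \<rho>_def)
qed

lemma vgerm_sn_increment_le_seminorms:
  assumes s: "0 < s" and \<gamma>: "1 < \<gamma>" "\<gamma> \<le> 2" and A: "\<forall>\<beta>\<in>A. \<beta> \<le> \<gamma>"
    and x0: "x0 \<in> Pts d" and r: "0 < r"
    and germ: "germ_sn s d \<gamma> (hball s d r x0) U < \<infinity>"
    and three: "three_pt_sn s d \<gamma> A (hball s d r x0) U \<Lambda> < \<infinity>"
    and grad: "\<forall>x\<in>hball s d r x0. spatial_grad d U x (\<nu> x)"
    and \<Lambda>: "\<forall>x\<in>hball s d r x0. \<forall>y\<in>hball s d r x0. \<Lambda> x y \<in> Rd d"
  shows "vgerm_sn s d (\<gamma> - 1) (hball s d r x0) (\<lambda>x y. \<nu> y - \<nu> x - \<Lambda> x y)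
           \<le> ereal (8 * (real (card A) + 6))
              * (three_pt_sn s d \<gamma> A (hball s d r x0) U \<Lambda> + germ_sn s d \<gamma> (hball s d r x0) U)"
proof (rule ereal_le_epsilon2)
  define C where "C = 8 * (real (card A) + 6)"
  have "0 < C" by (simp add: C_def)
  obtain K where K: "germ_sn s d \<gamma> (hball s d r x0) U = ereal K" and "0 \<le> K"
    using germ germ_sn_nonneg[OF center_in_hball[OF x0 r, of s], of s d \<gamma> U]
    by (cases "germ_sn s d \<gamma> (hball s d r x0) U") auto
  obtain T where T: "three_pt_sn s d \<gamma> A (hball s d r x0) U \<Lambda> = ereal T" and "0 \<le> T"
    using three three_pt_sn_nonneg[of s d \<gamma> A "hball s d r x0" U \<Lambda>]
    by (cases "three_pt_sn s d \<gamma> A (hball s d r x0) U \<Lambda>") auto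
  fix e :: real assume e: "0 < e"
  define e' where "e' = e / (2 * C)"
  have "0 < e'" using e \<open>0 < C\<close> by (simp add: e'_def)
  have "8 * ((T + e') * card A + 6 * (K + e')) \<le> C * ((T + e') + (K + e'))"
    using \<open>0 \<le> K\<close> \<open>0 \<le> T\<close> \<open>0 < e'\<close> by (simp add: C_def algebra_simps)
  also have "\<dots> = C * (T + K) + e" using \<open>0 < C\<close> by (simp add: e'_def field_simps)
  finally have "ereal (8 * ((T + e') * card A + 6 * (K + e')))
      \<le> ereal C * (three_pt_sn s d \<gamma> A (hball s d r x0) U \<Lambda> + germ_sn s d \<gamma> (hball s d r x0) U)
          + ereal e"
    by (simp add: K T)
  moreover have "vgerm_sn s d (\<gamma> - 1) (hball s d r x0) (\<lambda>x y. \<nu> y - \<nu> x - \<Lambda> x y)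
      \<le> ereal (8 * ((T + e') * card A + 6 * (K + e')))"
    using K T \<open>0 < e'\<close> by (intro vgerm_sn_increment_le[OF s \<gamma> A x0 _ _ grad \<Lambda>]) auto
  ultimately show "vgerm_sn s d (\<gamma> - 1) (hball s d r x0) (\<lambda>x y. \<nu> y - \<nu> x - \<Lambda> x y)
      \<le> ereal (8 * (real (card A) + 6))
          * (three_pt_sn s d \<gamma> A (hball s d r x0) U \<Lambda> + germ_sn s d \<gamma> (hball s d r x0) U) + ereal e"
    unfolding C_def by (rule order_trans[rotated])
qed

theorem lemma3p9:
  fixes \<gamma> :: real and A :: "real set"
  assumes "1 < \<gamma>" and "finite A" and "A \<subseteq> {0<..<\<gamma>}"
  shows "\<exists>C>0. \<forall>(s::real) (d::nat) (r::real) (x0::pt) (B::pt set)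
            (U::pt \<Rightarrow> pt \<Rightarrow> real) (\<nu>::pt \<Rightarrow> (nat \<Rightarrow> real)) (\<Lambda>::pt \<Rightarrow> pt \<Rightarrow> (nat \<Rightarrow> real)).
      1/2 < s \<and> s < 1 \<and> \<gamma> < 2 * s \<and> 0 < r \<and> x0 \<in> Pts d \<and> B = hball s d r x0
      \<and> germ_sn s d \<gamma> B U < \<infinity>
      \<and> (\<forall>x\<in>B. spatial_grad d U x (\<nu> x))
      \<and> (\<forall>x\<in>B. \<forall>y\<in>B. \<Lambda> x y \<in> Rd d)
      \<and> three_pt_sn s d \<gamma> A B U \<Lambda> < \<infinity>
      \<longrightarrow> vgerm_sn s d (\<gamma> - 1) B (\<lambda>x y. \<nu> y - \<nu> x - \<Lambda> x y)
            \<le> ereal C * (three_pt_sn s d \<gamma> A B U \<Lambda> + germ_sn s d \<gamma> B U)"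
proof (intro exI[of _ "8 * (real (card A) + 6)"] conjI allI impI)
  show "0 < 8 * (real (card A) + 6)" by simp
  have "\<forall>\<beta>\<in>A. \<beta> \<le> \<gamma>" using assms(3) by auto
  then show "vgerm_sn s d (\<gamma> - 1) B (\<lambda>x y. \<nu> y - \<nu> x - \<Lambda> x y)
      \<le> ereal (8 * (real (card A) + 6)) * (three_pt_sn s d \<gamma> A B U \<Lambda> + germ_sn s d \<gamma> B U)"
    if "1/2 < s \<and> s < 1 \<and> \<gamma> < 2 * s \<and> 0 < r \<and> x0 \<in> Pts d \<and> B = hball s d r x0
      \<and> germ_sn s d \<gamma> B U < \<infinity> \<and> (\<forall>x\<in>B. spatial_grad d U x (\<nu> x))
      \<and> (\<forall>x\<in>B. \<forall>y\<in>B. \<Lambda> x y \<in> Rd d) \<and> three_pt_sn s d \<gamma> A B U \<Lambda> < \<infinity>"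
    for s r :: real and d x0 B U \<nu> \<Lambda>
    using that assms(1)
    by (elim conjE, hypsubst, intro vgerm_sn_increment_le_seminorms) (assumption | linarith)+
qed

end
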